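(* For every positive integer $n$, let $\mathrm{PF}_n(321)$ denote the set of parking functions $p=(p_1,\dots,p_n)$ of length $n$ that avoid $321$ as a word, i.e. for which there are no indices $i_1<i_2<i_3$ with $p_{i_1}>p_{i_2}>p_{i_3}$. Let $w_{n,n+1}(321)$ denote the number of words $w_1w_2\cdots w_n$ with all $w_i\in[n+1]$ for which there are no indices $i_1<i_2<i_3$ with $w_{i_1}>w_{i_2}>w_{i_3}$. Then \[|\mathrm{PF}_n(321)| = \frac{1}{n+1}\, w_{n,n+1}(321).\]
   Context: $[n]=\{1,2,\dots,n\}$. A tuple $p=(p_1,\dots,p_n)\in[n]^n$ is a parking function of length $n$ if its weakly increasing rearrangement $(p'_1,\dots,p'_n)$ satisfies $p'_i\le i$ for all $i\in[n]$. *)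

theory Defs
  imports Complex_Main
begin

definition avoids_321 :: "nat list \<Rightarrow> bool" where
  "avoids_321 w \<longleftrightarrow> \<not> (\<exists>i1 i2 i3. i1 < i2 \<and> i2 < i3 \<and> i3 < length w \<and>
      w ! i1 > w ! i2 \<and> w ! i2 > w ! i3)"

(* p in [n]^n whose weakly increasing rearrangement p' satisfies p'_i <= i (1-indexed) *)
definition parking_function :: "nat \<Rightarrow> nat list \<Rightarrow> bool" where
  "parking_function n p \<longleftrightarrow> length p = n \<and> set p \<subseteq> {1..n} \<and>
      (\<forall>i < n. sort p ! i \<le> i + 1)"

definition PF_321 :: "nat \<Rightarrow> nat list set" where
  "PF_321 n = {p. parking_function n p \<and> avoids_321 p}"

definition words_321 :: "nat \<Rightarrow> nat \<Rightarrow> nat list set" where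
  "words_321 n k = {w. length w = n \<and> set w \<subseteq> {1..k} \<and> avoids_321 w}"

end

theory Submission
  imports Defs "HOL-Library.Multiset" "HOL-Combinatorics.Transposition"
begin

(* For a \<ge> 1 there is a Bender-Knuth type involution bk_swap a on 321-avoiding words that
   exchanges the multiplicities of the letters a and a + 1. The occurrences of a, a + 1 that are
   followed by a letter smaller than a, and those preceded by a letter larger than a + 1, form two
   weakly increasing subsequences (a decrease inside either would complete a 321); each of them is
   re-sorted with the two multiplicities exchanged, and every other a or a + 1 is simply replaced
   by the other letter. Composing these moves for a = n, ..., 1 gives a permutation rho of the
   321-avoiding words over [n + 1] that shifts the content cyclically by one.
   Being a parking function depends only on the content, and by Pollak's cyclic lemma exactly one
   of the n + 1 cyclic shifts of a word of length n over [n + 1] is a parking function. Hence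
   (p, j) \<mapsto> rho^j p is a bijection from PF_n(321) \<times> [n + 1] onto the words. *)

section \<open>Re-sorting a two-letter labelling\<close>

lemma card_rank_less:
  fixes S :: "nat set"
  assumes "finite S"
  shows "card {p\<in>S. card {q\<in>S. q < p} < s} = min s (card S)"
  using assms
proof (induction S rule: finite_linorder_max_induct)
  case empty
  then show ?case by simp
next
  case (insert b A)
  have "b \<notin> A"
    using insert.hyps by auto
  have rank_b: "{q\<in>insert b A. q < b} = A"
    using insert.hyps by auto
  have rank_A: "card {q\<in>insert b A. q < p} = card {q\<in>A. q < p}" if "p \<in> A" for p
  proof -
    have "{q\<in>insert b A. q < p} = {q\<in>A. q < p}"
      using insert.hyps that by auto
    then show ?thesis by simp
  qed
  have split: "{p\<in>insert b A. card {q\<in>insert b A. q < p} < s}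
      = {p\<in>A. card {q\<in>A. q < p} < s} \<union> (if card A < s then {b} else {})"
  proof (rule set_eqI)
    fix p
    show "p \<in> {p\<in>insert b A. card {q\<in>insert b A. q < p} < s} \<longleftrightarrow>
        p \<in> {p\<in>A. card {q\<in>A. q < p} < s} \<union> (if card A < s then {b} else {})"
    proof (cases "p = b")
      case True
      then show ?thesis
        using rank_b \<open>b \<notin> A\<close> by simp
    next
      case False
      then show ?thesis
        using rank_A[of p] by auto
    qed
  qed
  have "card {p\<in>insert b A. card {q\<in>insert b A. q < p} < s}
      = card {p\<in>A. card {q\<in>A. q < p} < s} + (if card A < s then 1 else 0)"
    unfolding split using \<open>b \<notin> A\<close> insert.hyps(1) by (subst card_Un_disjoint) auto
  also have "\<dots> = min s (card (insert b A))"
    using insert.IH \<open>b \<notin> A\<close> insert.hyps(1) by auto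
  finally show ?case .
qed

lemma mem_down_closed_iff_rank:
  fixes S X :: "nat set"
  assumes "finite S" and "X \<subseteq> S" and down: "\<And>p q. p \<in> S \<Longrightarrow> q \<in> X \<Longrightarrow> p < q \<Longrightarrow> p \<in> X"
    and "p \<in> S"
  shows "p \<in> X \<longleftrightarrow> card {q\<in>S. q < p} < card X"
proof
  assume "p \<in> X"
  have "finite X"
    using assms(1,2) finite_subset by blast
  have "{q\<in>S. q < p} \<subseteq> X - {p}"
    using down \<open>p \<in> X\<close> by auto
  then have "card {q\<in>S. q < p} \<le> card (X - {p})"
    using \<open>finite X\<close> by (intro card_mono) auto
  also have "\<dots> < card X"
    using \<open>finite X\<close> \<open>p \<in> X\<close> by (rule card_Diff1_less)
  finally show "card {q\<in>S. q < p} < card X" .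
next
  assume rank: "card {q\<in>S. q < p} < card X"
  show "p \<in> X"
  proof (rule ccontr)
    assume "p \<notin> X"
    then have "X \<subseteq> {q\<in>S. q < p}"
      using down assms(2,4) by (fastforce simp: not_less_iff_gr_or_eq)
    then have "card X \<le> card {q\<in>S. q < p}"
      using assms(1) by (intro card_mono) auto
    with rank show False by simp
  qed
qed

definition sorted_swap :: "nat \<Rightarrow> nat set \<Rightarrow> (nat \<Rightarrow> nat) \<Rightarrow> nat \<Rightarrow> nat" where
  "sorted_swap a S f p = (if card {q\<in>S. q < p} < card {q\<in>S. f q = Suc a} then a else Suc a)"

lemma sorted_swap_cong:
  assumes "\<And>q. q \<in> S \<Longrightarrow> f q = g q"
  shows "sorted_swap a S f = sorted_swap a S g"
proof -
  have "{q\<in>S. f q = Suc a} = {q\<in>S. g q = Suc a}"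
    using assms by auto
  then show ?thesis
    unfolding sorted_swap_def by simp
qed

lemma sorted_swap_in: "sorted_swap a S f p \<in> {a, Suc a}"
  unfolding sorted_swap_def by auto

lemma mono_on_sorted_swap:
  assumes "finite S"
  shows "mono_on S (sorted_swap a S f)"
proof (rule mono_onI)
  fix p q assume "p \<in> S" "q \<in> S" "p \<le> q"
  then have "card {r\<in>S. r < p} \<le> card {r\<in>S. r < q}"
    using assms by (intro card_mono) auto
  then show "sorted_swap a S f p \<le> sorted_swap a S f q"
    unfolding sorted_swap_def by auto
qed

lemma card_sorted_swap:
  assumes "finite S" and vals: "\<forall>p\<in>S. f p \<in> {a, Suc a}"
  shows "card {p\<in>S. sorted_swap a S f p = a} = card {p\<in>S. f p = Suc a}"
    and "card {p\<in>S. sorted_swap a S f p = Suc a} = card {p\<in>S. f p = a}"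
proof -
  have "card {q\<in>S. f q = Suc a} \<le> card S"
    using assms(1) by (intro card_mono) auto
  moreover have "{p\<in>S. sorted_swap a S f p = a} = {p\<in>S. card {q\<in>S. q < p} < card {q\<in>S. f q = Suc a}}"
    unfolding sorted_swap_def by auto
  ultimately show low: "card {p\<in>S. sorted_swap a S f p = a} = card {p\<in>S. f p = Suc a}"
    using card_rank_less[OF assms(1)] by simp
  have "{p\<in>S. sorted_swap a S f p = Suc a} = S - {p\<in>S. sorted_swap a S f p = a}"
    and "{p\<in>S. f p = a} = S - {p\<in>S. f p = Suc a}"
    using sorted_swap_in[of a S f] vals by auto
  then show "card {p\<in>S. sorted_swap a S f p = Suc a} = card {p\<in>S. f p = a}"
    using low assms(1) by (simp add: card_Diff_subset)
qed

lemma sorted_swap_sorted_swap: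
  assumes "finite S" and vals: "\<forall>p\<in>S. f p \<in> {a, Suc a}" and "mono_on S f" and "p \<in> S"
  shows "sorted_swap a S (sorted_swap a S f) p = f p"
proof -
  let ?X = "{q\<in>S. f q = a}"
  have "\<And>p q. p \<in> S \<Longrightarrow> q \<in> ?X \<Longrightarrow> p < q \<Longrightarrow> p \<in> ?X"
    using vals \<open>mono_on S f\<close> by (fastforce dest: mono_onD)
  then have "f p = a \<longleftrightarrow> card {q\<in>S. q < p} < card ?X"
    using mem_down_closed_iff_rank[OF assms(1), of ?X p] \<open>p \<in> S\<close> by auto
  then show ?thesis
    unfolding sorted_swap_def[of a S "sorted_swap a S f"] card_sorted_swap(2)[OF assms(1) vals]
    using vals \<open>p \<in> S\<close> by auto
qed

lemma count_image_mset_mset_set: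
  "finite S \<Longrightarrow> count (image_mset g (mset_set S)) y = card {p\<in>S. g p = y}"
proof (induction S rule: finite_induct)
  case (insert x F)
  have "{p\<in>insert x F. g p = y} = (if g x = y then insert x {p\<in>F. g p = y} else {p\<in>F. g p = y})"
    by auto
  then show ?case
    using insert by simp
qed simp

lemma image_mset_sorted_swap:
  assumes "finite S" and vals: "\<forall>p\<in>S. f p \<in> {a, Suc a}"
  shows "image_mset (sorted_swap a S f) (mset_set S) = image_mset (transpose a (Suc a) \<circ> f) (mset_set S)"
proof (rule multiset_eqI)
  fix y
  have "card {p\<in>S. sorted_swap a S f p = y} = card {p\<in>S. f p = transpose a (Suc a) y}"
  proof (cases "y \<in> {a, Suc a}")
    case True
    then show ?thesis
      using card_sorted_swap[OF assms] by auto
  next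
    case False
    then have "{p\<in>S. sorted_swap a S f p = y} = {}" and "{p\<in>S. f p = transpose a (Suc a) y} = {}"
      using sorted_swap_in[of a S f] vals by auto
    then show ?thesis
      by (simp only: card.empty)
  qed
  also have "\<dots> = card {p\<in>S. transpose a (Suc a) (f p) = y}"
    by (metis transpose_involutory)
  finally show "count (image_mset (sorted_swap a S f) (mset_set S)) y
      = count (image_mset (transpose a (Suc a) \<circ> f) (mset_set S)) y"
    using assms(1) by (simp add: count_image_mset_mset_set)
qed

section \<open>A content-swapping involution on 321-avoiding words\<close>

definition before_smaller :: "nat \<Rightarrow> nat list \<Rightarrow> nat set" where
  "before_smaller a w =
     {p. p < length w \<and> w ! p \<in> {a, Suc a} \<and> (\<exists>q. p < q \<and> q < length w \<and> w ! q < a)}"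

(* For 321-avoiding words the subtraction is vacuous; it keeps the two blocks disjoint in general. *)
definition after_larger :: "nat \<Rightarrow> nat list \<Rightarrow> nat set" where
  "after_larger a w =
     {p. p < length w \<and> w ! p \<in> {a, Suc a} \<and> (\<exists>q<p. Suc a < w ! q)} - before_smaller a w"

definition bk_swap :: "nat \<Rightarrow> nat list \<Rightarrow> nat list" where
  "bk_swap a w = map (\<lambda>p.
     if p \<in> before_smaller a w then sorted_swap a (before_smaller a w) ((!) w) p
     else if p \<in> after_larger a w then sorted_swap a (after_larger a w) ((!) w) p
     else transpose a (Suc a) (w ! p)) [0..<length w]"

lemma length_bk_swap [simp]: "length (bk_swap a w) = length w"
  by (simp add: bk_swap_def)

lemma finite_before_smaller: "finite (before_smaller a w)"
  by (rule finite_subset[of _ "{..<length w}"]) (auto simp: before_smaller_def)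

lemma finite_after_larger: "finite (after_larger a w)"
  by (rule finite_subset[of _ "{..<length w}"]) (auto simp: after_larger_def)

lemma nth_bk_swap_before_smaller:
  assumes "p \<in> before_smaller a w"
  shows "bk_swap a w ! p = sorted_swap a (before_smaller a w) ((!) w) p"
proof -
  have "p < length w"
    using assms by (simp add: before_smaller_def)
  then show ?thesis
    using assms by (simp add: bk_swap_def)
qed

lemma nth_bk_swap_after_larger:
  assumes "p \<in> after_larger a w"
  shows "bk_swap a w ! p = sorted_swap a (after_larger a w) ((!) w) p"
proof -
  have "p < length w" "p \<notin> before_smaller a w"
    using assms by (simp_all add: after_larger_def)
  then show ?thesis
    using assms by (simp add: bk_swap_def)
qed

lemma nth_bk_swap_other:
  "p < length w \<Longrightarrow> p \<notin> before_smaller a w \<Longrightarrow> p \<notin> after_larger a w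
    \<Longrightarrow> bk_swap a w ! p = transpose a (Suc a) (w ! p)"
  by (simp add: bk_swap_def)

lemma nth_bk_swap_cases:
  assumes "p < length w"
  shows "w ! p \<in> {a, Suc a} \<and> bk_swap a w ! p \<in> {a, Suc a} \<or> w ! p \<notin> {a, Suc a} \<and> bk_swap a w ! p = w ! p"
proof (cases "w ! p \<in> {a, Suc a}")
  case True
  have "bk_swap a w ! p \<in> {a, Suc a}"
  proof (cases "p \<in> before_smaller a w \<or> p \<in> after_larger a w")
    case True
    then show ?thesis
      using sorted_swap_in nth_bk_swap_before_smaller nth_bk_swap_after_larger by metis
  next
    case False
    then show ?thesis
      using \<open>w ! p \<in> {a, Suc a}\<close> assms nth_bk_swap_other by auto
  qed
  with True show ?thesis
    by simp
next
  case False
  then have "p \<notin> before_smaller a w" "p \<notin> after_larger a w"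
    by (auto simp: before_smaller_def after_larger_def)
  then show ?thesis
    using False assms nth_bk_swap_other by simp
qed

lemma nth_bk_swap_less_iff:
  assumes "i < length w" "j < length w" "\<not> (w ! i \<in> {a, Suc a} \<and> w ! j \<in> {a, Suc a})"
  shows "bk_swap a w ! i < bk_swap a w ! j \<longleftrightarrow> w ! i < w ! j"
  using nth_bk_swap_cases[OF assms(1), of a] nth_bk_swap_cases[OF assms(2), of a] assms(3) by auto

lemma nth_bk_swap_less_iff_less:
  "q < length w \<Longrightarrow> bk_swap a w ! q < a \<longleftrightarrow> w ! q < a"
  using nth_bk_swap_cases[of q w a] by auto

lemma nth_bk_swap_greater_iff_greater:
  "q < length w \<Longrightarrow> Suc a < bk_swap a w ! q \<longleftrightarrow> Suc a < w ! q"
  using nth_bk_swap_cases[of q w a] by auto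

lemma nth_bk_swap_in_iff:
  "q < length w \<Longrightarrow> bk_swap a w ! q \<in> {a, Suc a} \<longleftrightarrow> w ! q \<in> {a, Suc a}"
  using nth_bk_swap_cases[of q w a] by auto

lemma before_smaller_bk_swap: "before_smaller a (bk_swap a w) = before_smaller a w"
  unfolding before_smaller_def length_bk_swap
  by (intro Collect_cong conj_cong refl ex_cong nth_bk_swap_in_iff nth_bk_swap_less_iff_less) simp_all

lemma after_larger_bk_swap: "after_larger a (bk_swap a w) = after_larger a w"
  unfolding after_larger_def before_smaller_bk_swap length_bk_swap
  by (intro arg_cong2[where f = minus] Collect_cong conj_cong refl ex_cong nth_bk_swap_in_iff
      nth_bk_swap_greater_iff_greater) simp_all

lemma avoids_321D:
  "avoids_321 w \<Longrightarrow> i < j \<Longrightarrow> j < k \<Longrightarrow> k < length w \<Longrightarrow> w ! j < w ! i \<Longrightarrow> w ! k < w ! j \<Longrightarrow> False"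
  unfolding avoids_321_def by blast

lemma mono_on_before_smaller:
  assumes "avoids_321 w"
  shows "mono_on (before_smaller a w) ((!) w)"
proof (rule mono_onI)
  fix p q assume p: "p \<in> before_smaller a w" and q: "q \<in> before_smaller a w" and "p \<le> q"
  obtain r where "q < r" "r < length w" "w ! r < a"
    using q by (auto simp: before_smaller_def)
  then show "w ! p \<le> w ! q"
    using avoids_321D[OF assms, of p q r] p q \<open>p \<le> q\<close> by (fastforce simp: before_smaller_def)
qed

lemma mono_on_after_larger:
  assumes "avoids_321 w"
  shows "mono_on (after_larger a w) ((!) w)"
proof (rule mono_onI)
  fix p q assume p: "p \<in> after_larger a w" and q: "q \<in> after_larger a w" and "p \<le> q"
  obtain r where "r < p" "Suc a < w ! r"
    using p by (auto simp: after_larger_def)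
  then show "w ! p \<le> w ! q"
    using avoids_321D[OF assms, of r p q] p q \<open>p \<le> q\<close> by (fastforce simp: after_larger_def)
qed

lemma before_smaller_in: "p \<in> before_smaller a w \<Longrightarrow> w ! p \<in> {a, Suc a}"
  by (simp add: before_smaller_def)

lemma after_larger_in: "p \<in> after_larger a w \<Longrightarrow> w ! p \<in> {a, Suc a}"
  by (simp add: after_larger_def)

lemma bk_swap_bk_swap:
  assumes "avoids_321 w"
  shows "bk_swap a (bk_swap a w) = w"
proof (rule nth_equalityI)
  fix p assume "p < length (bk_swap a (bk_swap a w))"
  then have "p < length w"
    by simp
  let ?v = "bk_swap a w" and ?A = "before_smaller a w" and ?B = "after_larger a w"
  consider "p \<in> ?A" | "p \<in> ?B" | "p \<notin> ?A" "p \<notin> ?B"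
    by blast
  then show "bk_swap a ?v ! p = w ! p"
  proof cases
    case 1
    have "bk_swap a ?v ! p = sorted_swap a ?A ((!) ?v) p"
      using 1 nth_bk_swap_before_smaller[of p a ?v] by (simp add: before_smaller_bk_swap)
    also have "\<dots> = sorted_swap a ?A (sorted_swap a ?A ((!) w)) p"
      by (simp add: nth_bk_swap_before_smaller cong: sorted_swap_cong)
    also have "\<dots> = w ! p"
      using 1 assms before_smaller_in
      by (intro sorted_swap_sorted_swap finite_before_smaller mono_on_before_smaller) blast+
    finally show ?thesis .
  next
    case 2
    have "bk_swap a ?v ! p = sorted_swap a ?B ((!) ?v) p"
      using 2 nth_bk_swap_after_larger[of p a ?v] by (simp add: after_larger_bk_swap)
    also have "\<dots> = sorted_swap a ?B (sorted_swap a ?B ((!) w)) p"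
      by (simp add: nth_bk_swap_after_larger cong: sorted_swap_cong)
    also have "\<dots> = w ! p"
      using 2 assms after_larger_in
      by (intro sorted_swap_sorted_swap finite_after_larger mono_on_after_larger) blast+
    finally show ?thesis .
  next
    case 3
    then show ?thesis
      using \<open>p < length w\<close> by (simp add: nth_bk_swap_other before_smaller_bk_swap after_larger_bk_swap)
  qed
qed simp

lemma mset_eq_image_mset_nth: "mset xs = image_mset ((!) xs) (mset_set {..<length xs})"
  by (metis map_nth mset_map mset_upt atLeast0LessThan)

lemma mset_bk_swap: "mset (bk_swap a w) = image_mset (transpose a (Suc a)) (mset w)"
proof -
  let ?v = "bk_swap a w" and ?t = "transpose a (Suc a) \<circ> (!) w"
  let ?A = "before_smaller a w" and ?B = "after_larger a w"
  let ?R = "{..<length w} - ?A - ?B"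
  have "mset_set (?A \<union> ?B \<union> ?R) = mset_set (?A \<union> ?B) + mset_set ?R"
    by (rule mset_set_Union) (auto simp: finite_before_smaller finite_after_larger)
  also have "mset_set (?A \<union> ?B) = mset_set ?A + mset_set ?B"
    by (rule mset_set_Union) (auto simp: finite_before_smaller finite_after_larger after_larger_def)
  finally have "mset_set (?A \<union> ?B \<union> ?R) = mset_set ?A + mset_set ?B + mset_set ?R" .
  moreover have "?A \<union> ?B \<union> ?R = {..<length w}"
    by (auto simp: before_smaller_def after_larger_def)
  ultimately have parts: "mset_set {..<length w} = mset_set ?A + mset_set ?B + mset_set ?R"
    by simp
  have "image_mset ((!) ?v) (mset_set ?A) = image_mset ?t (mset_set ?A)"
  proof -
    have "image_mset ((!) ?v) (mset_set ?A) = image_mset (sorted_swap a ?A ((!) w)) (mset_set ?A)"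
      using finite_before_smaller by (intro image_mset_cong) (simp add: nth_bk_swap_before_smaller)
    then show ?thesis
      using image_mset_sorted_swap[OF finite_before_smaller] before_smaller_in by simp
  qed
  moreover have "image_mset ((!) ?v) (mset_set ?B) = image_mset ?t (mset_set ?B)"
  proof -
    have "image_mset ((!) ?v) (mset_set ?B) = image_mset (sorted_swap a ?B ((!) w)) (mset_set ?B)"
      using finite_after_larger by (intro image_mset_cong) (simp add: nth_bk_swap_after_larger)
    then show ?thesis
      using image_mset_sorted_swap[OF finite_after_larger] after_larger_in by simp
  qed
  moreover have "image_mset ((!) ?v) (mset_set ?R) = image_mset ?t (mset_set ?R)"
    by (intro image_mset_cong) (simp add: nth_bk_swap_other)
  ultimately have "image_mset ((!) ?v) (mset_set {..<length w}) = image_mset ?t (mset_set {..<length w})"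
    unfolding parts by simp
  then show ?thesis
    using mset_eq_image_mset_nth[of ?v] mset_eq_image_mset_nth[of w] by (simp add: multiset.map_comp)
qed

lemma mono_on_bk_swap_before_smaller: "mono_on (before_smaller a w) ((!) (bk_swap a w))"
  using mono_on_sorted_swap[OF finite_before_smaller, of a w a "(!) w"]
  by (simp add: mono_on_def nth_bk_swap_before_smaller)

lemma mono_on_bk_swap_after_larger: "mono_on (after_larger a w) ((!) (bk_swap a w))"
  using mono_on_sorted_swap[OF finite_after_larger, of a w a "(!) w"]
  by (simp add: mono_on_def nth_bk_swap_after_larger)

lemma not_before_smaller_if_larger_before:
  assumes "avoids_321 w" "i < p" "Suc a < w ! i"
  shows "p \<notin> before_smaller a w"
proof
  assume "p \<in> before_smaller a w"
  then obtain r where "p < r" "r < length w" "w ! r < a" "w ! p \<in> {a, Suc a}"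
    by (auto simp: before_smaller_def)
  moreover from this have "w ! p < w ! i" "w ! r < w ! p"
    using assms(3) by auto
  ultimately show False
    using avoids_321D[OF assms(1) assms(2)] by blast
qed

lemma nth_bk_swap_le_if_smaller_after:
  assumes "i < j" "j < l" "l < length w" "w ! i \<in> {a, Suc a}" "w ! j \<in> {a, Suc a}" "w ! l < a"
  shows "bk_swap a w ! i \<le> bk_swap a w ! j"
proof -
  have "i \<in> before_smaller a w" "j \<in> before_smaller a w"
    using assms by (auto simp: before_smaller_def intro!: exI[of _ l])
  then show ?thesis
    using \<open>i < j\<close> by (intro mono_onD[OF mono_on_bk_swap_before_smaller]) simp_all
qed

lemma nth_bk_swap_le_if_larger_before:
  assumes "avoids_321 w" "i < j" "j < l" "l < length w" "w ! j \<in> {a, Suc a}" "w ! l \<in> {a, Suc a}"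
    "Suc a < w ! i"
  shows "bk_swap a w ! j \<le> bk_swap a w ! l"
proof -
  have "j \<notin> before_smaller a w" "l \<notin> before_smaller a w"
    using not_before_smaller_if_larger_before[OF assms(1) _ assms(7)] assms(2,3) by simp_all
  then have "j \<in> after_larger a w" "l \<in> after_larger a w"
    using assms by (auto simp: after_larger_def intro!: exI[of _ i])
  then show ?thesis
    using \<open>j < l\<close> by (intro mono_onD[OF mono_on_bk_swap_after_larger]) simp_all
qed

lemma avoids_321_bk_swap:
  assumes av: "avoids_321 w"
  shows "avoids_321 (bk_swap a w)"
  unfolding avoids_321_def
proof clarify
  let ?v = "bk_swap a w" and ?C = "{a, Suc a}"
  fix i j l assume "i < j" "j < l" "l < length ?v" and desc: "?v ! j < ?v ! i" "?v ! l < ?v ! j"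
  then have idx: "i < length w" "j < length w" "l < length w"
    by simp_all
  consider "w ! i \<in> ?C" "w ! j \<in> ?C" | "w ! j \<in> ?C" "w ! l \<in> ?C"
    | "w ! i \<in> ?C" "w ! l \<in> ?C" | "\<not> (w ! i \<in> ?C \<and> w ! j \<in> ?C)" "\<not> (w ! j \<in> ?C \<and> w ! l \<in> ?C)"
    by blast
  then show False
  proof cases
    case 1
    then have "?v ! i \<in> ?C" "?v ! j \<in> ?C"
      using idx nth_bk_swap_in_iff by blast+
    then have "?v ! j = a"
      using desc(1) by auto
    then have "w ! l < a"
      using desc(2) idx nth_bk_swap_less_iff_less by auto
    then show False
      using nth_bk_swap_le_if_smaller_after[OF \<open>i < j\<close> \<open>j < l\<close> idx(3) 1] desc(1) by simp
  next
    case 2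
    then have "?v ! j \<in> ?C" "?v ! l \<in> ?C"
      using idx nth_bk_swap_in_iff by blast+
    then have "?v ! j = Suc a"
      using desc(2) by auto
    then have "Suc a < w ! i"
      using desc(1) idx nth_bk_swap_greater_iff_greater by auto
    then show False
      using nth_bk_swap_le_if_larger_before[OF av \<open>i < j\<close> \<open>j < l\<close> idx(3) 2] desc(2) by simp
  next
    case 3
    then have "?v ! i \<in> ?C" "?v ! l \<in> ?C"
      using idx nth_bk_swap_in_iff by blast+
    then show False
      using desc by auto
  next
    case 4
    then show False
      using avoids_321D[OF av \<open>i < j\<close> \<open>j < l\<close>] desc idx nth_bk_swap_less_iff by blast
  qed
qed

lemma bk_swap_words_321:
  assumes "1 \<le> a" "Suc a \<le> k" "w \<in> words_321 n k"
  shows "bk_swap a w \<in> words_321 n k"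
proof -
  have "set (bk_swap a w) = transpose a (Suc a) ` set w"
    using arg_cong[OF mset_bk_swap, of set_mset a w] by simp
  also have "\<dots> \<subseteq> {1..k}"
    using assms by (auto simp: words_321_def transpose_def)
  finally show ?thesis
    using assms(3) avoids_321_bk_swap by (simp add: words_321_def)
qed

section \<open>Cyclic rotation of the content\<close>

fun rotate_content :: "nat \<Rightarrow> nat list \<Rightarrow> nat list" where
  "rotate_content 0 w = w"
| "rotate_content (Suc m) w = rotate_content m (bk_swap (Suc m) w)"

definition cycle_upto :: "nat \<Rightarrow> nat \<Rightarrow> nat" where
  "cycle_upto m x = (if x = Suc m then 1 else if 1 \<le> x \<and> x \<le> m then x + 1 else x)"

lemma rotate_content_words_321: "m < k \<Longrightarrow> w \<in> words_321 n k \<Longrightarrow> rotate_content m w \<in> words_321 n k"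
  by (induction m arbitrary: w) (simp_all add: bk_swap_words_321)

lemma mset_rotate_content: "mset (rotate_content m w) = image_mset (cycle_upto m) (mset w)"
proof (induction m arbitrary: w)
  case 0
  have "cycle_upto 0 = id"
    by (auto simp: cycle_upto_def)
  then show ?case
    by simp
next
  case (Suc m)
  have "cycle_upto m \<circ> transpose (Suc m) (Suc (Suc m)) = cycle_upto (Suc m)"
    by (auto simp: cycle_upto_def transpose_def)
  then show ?case
    by (simp add: Suc.IH mset_bk_swap multiset.map_comp)
qed

lemma inj_on_rotate_content: "m < k \<Longrightarrow> inj_on (rotate_content m) (words_321 n k)"
proof (induction m)
  case 0
  then show ?case
    by simp
next
  case (Suc m)
  have "inj_on (bk_swap (Suc m)) (words_321 n k)"
    by (rule inj_on_inverseI[of _ "bk_swap (Suc m)"]) (simp add: words_321_def bk_swap_bk_swap)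
  moreover have "bk_swap (Suc m) ` words_321 n k \<subseteq> words_321 n k"
    using Suc.prems by (auto intro: bk_swap_words_321)
  then have "inj_on (rotate_content m) (bk_swap (Suc m) ` words_321 n k)"
    using Suc by (auto intro: inj_on_subset)
  ultimately have "inj_on (rotate_content m \<circ> bk_swap (Suc m)) (words_321 n k)"
    by (rule comp_inj_on)
  then show ?case
    by (simp add: comp_def)
qed

lemma finite_words_321: "finite (words_321 n k)"
  by (rule finite_subset[of _ "{w. set w \<subseteq> {1..k} \<and> length w = n}"])
    (auto simp: words_321_def intro: finite_lists_length_eq)

lemma bij_betw_rotate_content: "m < k \<Longrightarrow> bij_betw (rotate_content m) (words_321 n k) (words_321 n k)"
  using endo_inj_surj[OF finite_words_321] rotate_content_words_321 inj_on_rotate_content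
  by (simp add: bij_betw_def image_subset_iff)

definition cyclic_shift :: "nat \<Rightarrow> nat \<Rightarrow> nat \<Rightarrow> nat" where
  "cyclic_shift N j x = (x - 1 + j) mod N + 1"

lemma cyclic_shift_in: "0 < N \<Longrightarrow> cyclic_shift N j x \<in> {1..N}"
  by (simp add: cyclic_shift_def Suc_leI)

lemma cyclic_shift_cyclic_shift:
  assumes "1 \<le> x"
  shows "cyclic_shift N i (cyclic_shift N j x) = cyclic_shift N (i + j) x"
proof -
  obtain y where x: "x = Suc y"
    using assms by (cases x) auto
  have "cyclic_shift N i (cyclic_shift N j x) = ((y + j) mod N + i) mod N + 1"
    unfolding cyclic_shift_def x by simp
  also have "\<dots> = (y + (i + j)) mod N + 1"
    by (simp add: mod_add_left_eq add.assoc add.commute[of j i])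
  finally show ?thesis
    unfolding cyclic_shift_def x by simp
qed

lemma cyclic_shift_mod: "cyclic_shift N (j mod N) = cyclic_shift N j"
  by (simp add: cyclic_shift_def mod_add_right_eq fun_eq_iff)

lemma cyclic_shift_0: "x \<in> {1..N} \<Longrightarrow> cyclic_shift N 0 x = x"
  by (auto simp: cyclic_shift_def)

lemma cyclic_shift_eq:
  assumes "x \<in> {1..N}" "j \<le> N"
  shows "cyclic_shift N j x = (if x + j \<le> N then x + j else x + j - N)"
proof (cases "x + j \<le> N")
  case True
  then show ?thesis
    using assms by (simp add: cyclic_shift_def)
next
  case False
  then have "x - 1 + j = (x + j - N - 1) + N" "x + j - N - 1 < N"
    using assms by auto
  then have "(x - 1 + j) mod N = x + j - N - 1"
    by simp
  then show ?thesis
    using False by (simp add: cyclic_shift_def)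
qed

lemma cycle_upto_eq_cyclic_shift: "x \<in> {1..Suc m} \<Longrightarrow> cycle_upto m x = cyclic_shift (Suc m) 1 x"
  by (auto simp: cycle_upto_def cyclic_shift_def)

lemma mset_rotate_content_funpow:
  assumes "set w \<subseteq> {1..Suc n}"
  shows "mset ((rotate_content n ^^ j) w) = image_mset (cyclic_shift (Suc n) j) (mset w)"
proof (induction j)
  case 0
  have "image_mset (cyclic_shift (Suc n) 0) (mset w) = mset w"
    using assms by (induction w) (auto simp: cyclic_shift_0)
  then show ?case
    by simp
next
  case (Suc j)
  have "cycle_upto n (cyclic_shift (Suc n) j x) = cyclic_shift (Suc n) (Suc j) x" if "x \<in># mset w" for x
    using that assms cyclic_shift_in[of "Suc n" j x]
    by (auto simp: cycle_upto_eq_cyclic_shift cyclic_shift_cyclic_shift)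
  then have "image_mset (cycle_upto n \<circ> cyclic_shift (Suc n) j) (mset w)
      = image_mset (cyclic_shift (Suc n) (Suc j)) (mset w)"
    by (intro image_mset_cong) simp
  then show ?case
    by (simp add: Suc.IH mset_rotate_content multiset.map_comp)
qed

section \<open>Pollak's cyclic lemma\<close>

lemma length_filter_mono:
  "(\<And>x. x \<in> set xs \<Longrightarrow> P x \<Longrightarrow> Q x) \<Longrightarrow> length (filter P xs) \<le> length (filter Q xs)"
  by (induction xs) auto

lemma length_filter_disj:
  "(\<And>x. \<not> (P x \<and> Q x)) \<Longrightarrow> length (filter (\<lambda>x. P x \<or> Q x) xs) = length (filter P xs) + length (filter Q xs)"
  by (induction xs) auto

lemma ex_least_argmin:
  fixes g :: "nat \<Rightarrow> 'a::linorder"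
  assumes "lo \<le> hi"
  obtains a where "a \<in> {lo..hi}" "\<And>b. b \<in> {lo..hi} \<Longrightarrow> g a \<le> g b"
    "\<And>b. lo \<le> b \<Longrightarrow> b < a \<Longrightarrow> g a < g b"
proof -
  define m where "m = Min (g ` {lo..hi})"
  have "m \<in> g ` {lo..hi}"
    using assms unfolding m_def by (intro Min_in) auto
  then obtain a0 where "a0 \<in> {lo..hi} \<and> g a0 = m"
    by auto
  define a where "a = (LEAST a. a \<in> {lo..hi} \<and> g a = m)"
  have a: "a \<in> {lo..hi} \<and> g a = m"
    unfolding a_def by (rule LeastI) fact
  have min: "g a \<le> g b" if "b \<in> {lo..hi}" for b
    using a that unfolding m_def by simp
  have "g a < g b" if "lo \<le> b" "b < a" for b
  proof (rule ccontr)
    assume "\<not> g a < g b"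
    then have "b \<in> {lo..hi} \<and> g b = m"
      using a that min[of b] by auto
    then have "a \<le> b"
      unfolding a_def by (rule Least_le)
    then show False
      using that by simp
  qed
  then show thesis
    using that a min by blast
qed

lemma parking_function_mset_cong:
  assumes "mset p = mset q"
  shows "parking_function n p \<longleftrightarrow> parking_function n q"
proof -
  have "length p = length q"
    using assms by (metis size_mset)
  moreover have "set p = set q"
    using assms by (rule mset_eq_setD)
  moreover have "sort p = sort q"
    using assms by (simp add: properties_for_sort)
  ultimately show ?thesis
    unfolding parking_function_def by simp
qed

lemma sorted_nth_le_iff:
  fixes xs :: "'a::linorder list"
  assumes "sorted xs" "k < length xs"
  shows "xs ! k \<le> v \<longleftrightarrow> k < length (filter (\<lambda>x. x \<le> v) xs)"
  using assms
proof (induction xs arbitrary: k)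
  case Nil
  then show ?case by simp
next
  case (Cons x xs)
  show ?case
  proof (cases "x \<le> v")
    case True
    then show ?thesis
      using Cons by (cases k) auto
  next
    case False
    have above: "\<not> y \<le> v" if "y \<in> set (x # xs)" for y
      using Cons.prems(1) that False by auto
    then have "filter (\<lambda>x. x \<le> v) (x # xs) = []"
      unfolding filter_empty_conv by blast
    moreover have "\<not> (x # xs) ! k \<le> v"
      using above nth_mem[OF Cons.prems(2)] by blast
    ultimately show ?thesis
      by simp
  qed
qed

lemma parking_function_iff_count:
  assumes len: "length p = n" and pos: "0 \<notin> set p"
  shows "parking_function n p \<longleftrightarrow> (\<forall>i\<in>{1..n}. i \<le> length (filter (\<lambda>x. x \<le> i) p))"
proof -
  have sorted_le: "sort p ! k \<le> v \<longleftrightarrow> k < length (filter (\<lambda>x. x \<le> v) p)" if "k < n" for k v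
    using sorted_nth_le_iff[of "sort p" k v] that len by (simp add: filter_sort)
  show ?thesis
  proof
    assume pf: "parking_function n p"
    show "\<forall>i\<in>{1..n}. i \<le> length (filter (\<lambda>x. x \<le> i) p)"
    proof
      fix i assume "i \<in> {1..n}"
      then have "i - 1 < n" "i - 1 + 1 = i"
        by auto
      moreover have "\<forall>k<n. sort p ! k \<le> k + 1"
        using pf by (simp add: parking_function_def)
      ultimately have "i - 1 < n" "sort p ! (i - 1) \<le> i"
        by metis+
      then show "i \<le> length (filter (\<lambda>x. x \<le> i) p)"
        using sorted_le by fastforce
    qed
  next
    assume count: "\<forall>i\<in>{1..n}. i \<le> length (filter (\<lambda>x. x \<le> i) p)"
    have "x \<in> {1..n}" if "x \<in> set p" for x
    proof -
      have "n \<in> {1..n}"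
        using that len by (cases p) auto
      then have "\<not> length (filter (\<lambda>x. x \<le> n) p) < length p"
        using count len by (simp add: not_less)
      then have "x \<le> n"
        using length_filter_less[OF that, of "\<lambda>x. x \<le> n"] by blast
      moreover have "x \<noteq> 0"
        using that pos by metis
      ultimately show ?thesis
        by simp
    qed
    moreover have "sort p ! k \<le> k + 1" if "k < n" for k
    proof -
      have "k + 1 \<le> length (filter (\<lambda>x. x \<le> k + 1) p)"
        using count that by simp
      then show ?thesis
        using sorted_le[OF that] by simp
    qed
    ultimately show "parking_function n p"
      using len by (auto simp: parking_function_def)
  qed
qed

lemma parking_function_cyclic_shift_unique:
  assumes pf: "parking_function n p" and pf_shift: "parking_function n (map (cyclic_shift (Suc n) d) p)"
    and "d < Suc n"
  shows "d = 0"
proof (rule ccontr)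
  assume "d \<noteq> 0"
  define m where "m = Suc n - d"
  have m: "1 \<le> m" "m \<le> n" "m + d = Suc n"
    using \<open>d \<noteq> 0\<close> \<open>d < Suc n\<close> by (auto simp: m_def)
  have len: "length p = n" and range: "set p \<subseteq> {1..n}"
    using pf by (auto simp: parking_function_def)
  then have "0 \<notin> set p"
    by auto
  then have "m \<le> length (filter (\<lambda>x. x \<le> m) p)"
    using pf parking_function_iff_count[OF len] m by auto
  moreover have "0 \<notin> set (map (cyclic_shift (Suc n) d) p)"
    by (auto simp: cyclic_shift_def)
  then have "\<forall>i\<in>{1..n}. i \<le> length (filter (\<lambda>x. x \<le> i) (map (cyclic_shift (Suc n) d) p))"
    using pf_shift parking_function_iff_count[of "map (cyclic_shift (Suc n) d) p" n] len by simp
  then have "d \<le> length (filter (\<lambda>x. x \<le> d) (map (cyclic_shift (Suc n) d) p))"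
    using \<open>d \<noteq> 0\<close> m by simp
  then have "d \<le> length (filter (\<lambda>x. \<not> x \<le> m) p)"
  proof (rule order.trans)
    have "\<not> x \<le> m" if "x \<in> set p" "cyclic_shift (Suc n) d x \<le> d" for x
      using that range m cyclic_shift_eq[of x "Suc n" d] by auto
    then show "length (filter (\<lambda>x. x \<le> d) (map (cyclic_shift (Suc n) d) p))
        \<le> length (filter (\<lambda>x. \<not> x \<le> m) p)"
      by (simp add: comp_def length_filter_mono)
  qed
  ultimately show False
    using sum_length_filter_compl[of "\<lambda>x. x \<le> m" p] len m by linarith
qed

lemma length_filter_cyclic_shift_le:
  fixes w :: "nat list"
  defines "G m \<equiv> length (filter (\<lambda>x. x \<le> m) w)"
  assumes range: "set w \<subseteq> {1..N}" and a: "a \<in> {1..N}" and "i < N"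
  shows "length (filter (\<lambda>x. x \<le> i) (map (cyclic_shift N (N - a)) w))
    = (if a + i \<le> N then G (a + i) - G a else length w - G a + G (a + i - N))"
proof -
  have shift: "cyclic_shift N (N - a) x \<le> i \<longleftrightarrow> a < x \<and> x \<le> a + i \<or> x + N \<le> a + i"
    if "x \<in> set w" for x
  proof -
    have "x \<in> {1..N}"
      using that range by auto
    then have "cyclic_shift N (N - a) x = (if x \<le> a then x + N - a else x - a)"
      using cyclic_shift_eq[of x N "N - a"] a by auto
    then show ?thesis
      using \<open>x \<in> {1..N}\<close> a \<open>i < N\<close> by auto
  qed
  have "length (filter (\<lambda>x. x \<le> i) (map (cyclic_shift N (N - a)) w))
      = length (filter (\<lambda>x. a < x \<and> x \<le> a + i \<or> x + N \<le> a + i) w)"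
    using shift by (simp add: comp_def cong: filter_cong)
  also have "\<dots> = length (filter (\<lambda>x. a < x \<and> x \<le> a + i) w) + length (filter (\<lambda>x. x + N \<le> a + i) w)"
    using \<open>i < N\<close> by (intro length_filter_disj) auto
  also have "\<dots> = (if a + i \<le> N then G (a + i) - G a else length w - G a + G (a + i - N))"
  proof (cases "a + i \<le> N")
    case True
    have "G (a + i) = G a + length (filter (\<lambda>x. a < x \<and> x \<le> a + i) w)"
      unfolding G_def by (subst length_filter_disj[symmetric]) (auto intro!: arg_cong[where f = length] filter_cong)
    moreover have "filter (\<lambda>x. x + N \<le> a + i) w = []"
      using True range by (force simp: filter_empty_conv)
    ultimately show ?thesis
      using True by simp
  next
    case False
    have "filter (\<lambda>x. a < x \<and> x \<le> a + i) w = filter (\<lambda>x. \<not> x \<le> a) w"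
      using False range by (force intro: filter_cong)
    moreover have "filter (\<lambda>x. x + N \<le> a + i) w = filter (\<lambda>x. x \<le> a + i - N) w"
      using False by (intro filter_cong) auto
    ultimately show ?thesis
      using False sum_length_filter_compl[of "\<lambda>x. x \<le> a" w] unfolding G_def by simp
  qed
  finally show ?thesis .
qed

lemma parking_function_cyclic_shift_exists:
  assumes len: "length w = n" and range: "set w \<subseteq> {1..Suc n}"
  obtains d where "d < Suc n" "parking_function n (map (cyclic_shift (Suc n) d) w)"
proof -
  define G where "G m = length (filter (\<lambda>x. x \<le> m) w)" for m
  \<comment> \<open>Shift so that the least minimiser \<open>a\<close> of \<open>G m - m\<close> becomes the largest letter \<open>n + 1\<close>.\<close>
  obtain a where a: "a \<in> {1..Suc n}"
    and min: "\<And>b. b \<in> {1..Suc n} \<Longrightarrow> int (G a) - int a \<le> int (G b) - int b"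
    and strict: "\<And>b. 1 \<le> b \<Longrightarrow> b < a \<Longrightarrow> int (G a) - int a < int (G b) - int b"
    by (rule ex_least_argmin[of 1 "Suc n" "\<lambda>m. int (G m) - int m"]) auto
  let ?p = "map (cyclic_shift (Suc n) (Suc n - a)) w"
  have "i \<le> length (filter (\<lambda>x. x \<le> i) ?p)" if "i \<in> {1..n}" for i
  proof (cases "a + i \<le> Suc n")
    case True
    then show ?thesis
      using length_filter_cyclic_shift_le[OF range a, of i] min[of "a + i"] that
      unfolding G_def by auto
  next
    case False
    define b where "b = a + i - Suc n"
    have "1 \<le> b" "b < a" "int b = int a + int i - int (Suc n)"
      using False that a by (auto simp: b_def)
    moreover have "G a \<le> n"
      unfolding G_def by (metis len length_filter_le)
    ultimately have "i \<le> n - G a + G b"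
      using strict[of b] by linarith
    then show ?thesis
      using length_filter_cyclic_shift_le[OF range a, of i] False that len
      unfolding G_def b_def by simp
  qed
  moreover have "0 \<notin> set ?p"
    by (auto simp: cyclic_shift_def)
  ultimately have "parking_function n ?p"
    using parking_function_iff_count[of ?p n] len by simp
  then show thesis
    using that[of "Suc n - a"] a by auto
qed

lemma diff_add_mod_eq_0_iff:
  fixes i j N :: nat
  assumes "i < N" "j < N"
  shows "(N - i + j) mod N = 0 \<longleftrightarrow> i = j"
proof (cases "i \<le> j")
  case True
  have "N - i + j = (j - i) + N" "j - i < N"
    using True assms by auto
  then have "(N - i + j) mod N = j - i"
    by (metis mod_add_self2 mod_less)
  then show ?thesis
    using True by auto
next
  case False
  then show ?thesis
    using assms by simp
qed

lemma mset_cyclic_shift_rotate_content_funpow: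
  assumes "set w \<subseteq> {1..Suc n}"
  shows "mset (map (cyclic_shift (Suc n) i) ((rotate_content n ^^ j) w))
    = mset (map (cyclic_shift (Suc n) ((i + j) mod Suc n)) w)"
proof -
  have "cyclic_shift (Suc n) i (cyclic_shift (Suc n) j x) = cyclic_shift (Suc n) ((i + j) mod Suc n) x"
    if "x \<in> set w" for x
  proof -
    have "1 \<le> x"
      using that assms by auto
    then show ?thesis
      by (simp add: cyclic_shift_cyclic_shift cyclic_shift_mod)
  qed
  then have "image_mset (cyclic_shift (Suc n) i \<circ> cyclic_shift (Suc n) j) (mset w)
      = image_mset (cyclic_shift (Suc n) ((i + j) mod Suc n)) (mset w)"
    by (intro image_mset_cong) simp
  then show ?thesis
    by (simp add: mset_rotate_content_funpow[OF assms] multiset.map_comp)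
qed

lemma inj_on_parking_rotations:
  "inj_on (\<lambda>(p, j). (rotate_content n ^^ j) p) (PF_321 n \<times> {..<Suc n})"
proof (rule inj_onI, clarsimp)
  let ?N = "Suc n" and ?\<rho> = "rotate_content n"
  fix p j q i
  assume p: "p \<in> PF_321 n" and q: "q \<in> PF_321 n" and "j < ?N" "i < ?N"
    and eq: "(?\<rho> ^^ j) p = (?\<rho> ^^ i) q"
  have range: "set p \<subseteq> {1..?N}" "set q \<subseteq> {1..?N}"
    using p q by (auto simp: PF_321_def parking_function_def)
  define d where "d = (?N - i + j) mod ?N"
  have "mset (map (cyclic_shift ?N d) p) = mset (map (cyclic_shift ?N 0) q)"
    using mset_cyclic_shift_rotate_content_funpow[OF range(1), of "?N - i" j]
      mset_cyclic_shift_rotate_content_funpow[OF range(2), of "?N - i" i] eq \<open>i < ?N\<close>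
    by (simp add: d_def)
  also have "map (cyclic_shift ?N 0) q = q"
    using range(2) by (intro map_idI) (auto simp: cyclic_shift_0)
  finally have "parking_function n (map (cyclic_shift ?N d) p) \<longleftrightarrow> parking_function n q"
    by (rule parking_function_mset_cong)
  then have "parking_function n (map (cyclic_shift ?N d) p)"
    using q by (simp add: PF_321_def)
  then have "d = 0"
    using p by (intro parking_function_cyclic_shift_unique) (auto simp: PF_321_def d_def)
  then have "j = i"
    using diff_add_mod_eq_0_iff[OF \<open>i < ?N\<close> \<open>j < ?N\<close>] by (simp add: d_def)
  moreover have "p \<in> words_321 n ?N" "q \<in> words_321 n ?N"
    using p q by (auto simp: PF_321_def words_321_def parking_function_def)
  moreover have "inj_on (?\<rho> ^^ j) (words_321 n ?N)"
    using bij_betw_funpow[OF bij_betw_rotate_content[of n ?N n]] bij_betw_imp_inj_on by blast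
  ultimately show "p = q \<and> j = i"
    using inj_onD[of "?\<rho> ^^ j" _ p q] eq by simp
qed

lemma image_parking_rotations:
  "(\<lambda>(p, j). (rotate_content n ^^ j) p) ` (PF_321 n \<times> {..<Suc n}) = words_321 n (Suc n)"
proof -
  let ?N = "Suc n" and ?\<rho> = "rotate_content n" and ?W = "words_321 n (Suc n)"
  have bij: "bij_betw (?\<rho> ^^ j) ?W ?W" for j
    by (rule bij_betw_funpow[OF bij_betw_rotate_content]) simp
  have PF_W: "PF_321 n \<subseteq> ?W"
    by (auto simp: PF_321_def parking_function_def words_321_def)
  have "w \<in> (\<lambda>(p, j). (?\<rho> ^^ j) p) ` (PF_321 n \<times> {..<?N})" if w: "w \<in> ?W" for w
  proof -
    have range: "set w \<subseteq> {1..?N}" "length w = n"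
      using w by (auto simp: words_321_def)
    obtain d where "d < ?N" and pf: "parking_function n (map (cyclic_shift ?N d) w)"
      using parking_function_cyclic_shift_exists[OF range(2,1)] by blast
    define j where "j = (?N - d) mod ?N"
    obtain p where p: "p \<in> ?W" "w = (?\<rho> ^^ j) p"
      using w bij[of j] by (auto simp: bij_betw_def)
    have "(d + j) mod ?N = 0"
      using \<open>d < ?N\<close> by (cases "d = 0") (auto simp: j_def)
    then have "mset (map (cyclic_shift ?N d) w) = mset (map (cyclic_shift ?N 0) p)"
      using mset_cyclic_shift_rotate_content_funpow[of p n d j] p by (simp add: words_321_def)
    also have "map (cyclic_shift ?N 0) p = p"
      using p by (intro map_idI) (auto simp: cyclic_shift_0 words_321_def)
    finally have "parking_function n (map (cyclic_shift ?N d) w) \<longleftrightarrow> parking_function n p"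
      by (rule parking_function_mset_cong)
    then have "p \<in> PF_321 n"
      using pf p by (simp add: PF_321_def words_321_def)
    then show ?thesis
      using p by (force simp: j_def)
  qed
  moreover have "(\<lambda>(p, j). (?\<rho> ^^ j) p) ` (PF_321 n \<times> {..<?N}) \<subseteq> ?W"
    using PF_W bij by (auto simp: bij_betw_def)
  ultimately show ?thesis
    by blast
qed

theorem theorem3p3:
  fixes n :: nat
  assumes "n \<ge> 1"
  shows "real (card (PF_321 n)) = real (card (words_321 n (n + 1))) / real (n + 1)"
proof -
  have "bij_betw (\<lambda>(p, j). (rotate_content n ^^ j) p) (PF_321 n \<times> {..<Suc n}) (words_321 n (Suc n))"
    using inj_on_parking_rotations image_parking_rotations by (rule bij_betw_imageI)
  then have "card (PF_321 n \<times> {..<Suc n}) = card (words_321 n (Suc n))"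
    by (rule bij_betw_same_card)
  then have "card (words_321 n (n + 1)) = card (PF_321 n) * (n + 1)"
    by (simp add: card_cartesian_product)
  then show ?thesis
    by (simp add: field_simps)
qed

end
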